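(* Let $\mathbf r:[L_1,L_2]\to\mathbb R^4$ be an arc-length parametrized curve with Frenet frame $\{\mathbf T,\mathbf N,\mathbf B_1,\mathbf B_2\}$ and curvatures $k_1,k_2,k_3$ (with $k_1>0$), and let $$\mathbf P(s,t,q)=\mathbf r(s)+u(s,t,q)\mathbf T(s)+v(s,t,q)\mathbf N(s)+w(s,t,q)\mathbf B_1(s)+x(s,t,q)\mathbf B_2(s),$$ $(s,t,q)\in[L_1,L_2]\times[T_1,T_2]\times[Q_1,Q_2]$, with $C^1$ marching-scale functions $u,v,w,x$. Fix $t_0\in[T_1,T_2]$, $q_0\in[Q_1,Q_2]$. Then $\mathbf r$ is an isogeodesic of $\mathbf P$ at $(t_0,q_0)$ (i.e. $\mathbf P(s,t_0,q_0)=\mathbf r(s)$ for all $s$, $\mathbf P$ is regular along $\mathbf r$, and $\mathbf r$ is a geodesic of $\mathbf P$) if and only if for all $s\in[L_1,L_2]$: (i) $u(s,t_0,q_0)=v(s,t_0,q_0)=w(s,t_0,q_0)=x(s,t_0,q_0)=0$; (ii) $\frac{\partial v}{\partial t}\frac{\partial x}{\partial q}-\frac{\partial v}{\partial q}\frac{\partial x}{\partial t}=0$ and $\frac{\partial v}{\partial t}\frac{\partial w}{\partial q}-\frac{\partial v}{\partial q}\frac{\partial w}{\partial t}=0$ at $(s,t_0,q_0)$; (iii) $\frac{\partial w}{\partial t}\frac{\partial x}{\partial q}-\frac{\partial w}{\partial q}\frac{\partial x}{\partial t}\neq 0$ at $(s,t_0,q_0)$. Moreover, given (i) and (iii), condition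 (ii) is equivalent to $\frac{\partial v}{\partial t}(s,t_0,q_0)=\frac{\partial v}{\partial q}(s,t_0,q_0)=0$.
   Context: The Frenet frame of an arc-length curve $\mathbf r$ in $\mathbb R^4$ (assumed smooth enough with $k_1,k_2$ nonvanishing so that the frame is defined) satisfies $\mathbf T=\mathbf r'$, $\mathbf T'=k_1\mathbf N$, $\mathbf N'=-k_1\mathbf T+k_2\mathbf B_1$, $\mathbf B_1'=-k_2\mathbf N+k_3\mathbf B_2$, $\mathbf B_2'=-k_3\mathbf B_1$, and is orthonormal. A hypersurface $\mathbf P(s,t,q)$ is regular at a point if $\partial_s\mathbf P,\partial_t\mathbf P,\partial_q\mathbf P$ are linearly independent there; its normal is the four-dimensional vector product $\partial_s\mathbf P\otimes\partial_t\mathbf P\otimes\partial_q\mathbf P$ (formal determinant with first row $\mathbf e_1,\dots,\mathbf e_4$ and the three vectors' coordinates as remaining rows). A curve $\mathbf r$ lying on $\mathbf P$ with $k_1>0$ is a geodesic of $\mathbf P$ iff its principal normal $\mathbf N$ is parallel to the normal of $\mathbf P$ along the curve. A curve is an isoparametric curve of $\mathbf P$ if $\mathbf r(s)=\mathbf P(s,t_0,q_0)$ for some fixed $t_0,q_0$; an isogeodesic is a curve that is both a geodesic and an isoparametric curve. *)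

theory Defs
  imports "HOL-Analysis.Analysis"
begin

definition pd_s :: "(real \<Rightarrow> real \<Rightarrow> real \<Rightarrow> 'a::real_normed_vector) \<Rightarrow> real set \<Rightarrow> real \<Rightarrow> real \<Rightarrow> real \<Rightarrow> 'a" where
  "pd_s f I s t q = vector_derivative (\<lambda>s'. f s' t q) (at s within I)"

definition pd_t :: "(real \<Rightarrow> real \<Rightarrow> real \<Rightarrow> 'a::real_normed_vector) \<Rightarrow> real set \<Rightarrow> real \<Rightarrow> real \<Rightarrow> real \<Rightarrow> 'a" where
  "pd_t f J s t q = vector_derivative (\<lambda>t'. f s t' q) (at t within J)"

definition pd_q :: "(real \<Rightarrow> real \<Rightarrow> real \<Rightarrow> 'a::real_normed_vector) \<Rightarrow> real set \<Rightarrow> real \<Rightarrow> real \<Rightarrow> real \<Rightarrow> 'a" where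
  "pd_q f K s t q = vector_derivative (\<lambda>q'. f s t q') (at q within K)"

definition C1_box :: "(real \<Rightarrow> real \<Rightarrow> real \<Rightarrow> real) \<Rightarrow> real set \<Rightarrow> real set \<Rightarrow> real set \<Rightarrow> bool" where
  "C1_box f I J K \<longleftrightarrow>
     (\<forall>s\<in>I. \<forall>t\<in>J. \<forall>q\<in>K.
        (\<lambda>s'. f s' t q) differentiable (at s within I) \<and>
        (\<lambda>t'. f s t' q) differentiable (at t within J) \<and>
        (\<lambda>q'. f s t q') differentiable (at q within K)) \<and>
     continuous_on (I \<times> J \<times> K) (\<lambda>(s,t,q). f s t q) \<and>
     continuous_on (I \<times> J \<times> K) (\<lambda>(s,t,q). pd_s f I s t q) \<and>
     continuous_on (I \<times> J \<times> K) (\<lambda>(s,t,q). pd_t f J s t q) \<and>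
     continuous_on (I \<times> J \<times> K) (\<lambda>(s,t,q). pd_q f K s t q)"

text \<open>The four-dimensional vector product: formal determinant with first row e1..e4
  and the coordinates of a, b, c as the remaining rows (cofactor expansion along row 1).\<close>

definition det3 :: "real \<Rightarrow> real \<Rightarrow> real \<Rightarrow> real \<Rightarrow> real \<Rightarrow> real \<Rightarrow> real \<Rightarrow> real \<Rightarrow> real \<Rightarrow> real" where
  "det3 a1 a2 a3 b1 b2 b3 c1 c2 c3 =
     a1 * (b2 * c3 - b3 * c2) - a2 * (b1 * c3 - b3 * c1) + a3 * (b1 * c2 - b2 * c1)"

definition cross4 :: "real^4 \<Rightarrow> real^4 \<Rightarrow> real^4 \<Rightarrow> real^4" where
  "cross4 a b c = vector
     [  det3 (a$2) (a$3) (a$4) (b$2) (b$3) (b$4) (c$2) (c$3) (c$4),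
      - det3 (a$1) (a$3) (a$4) (b$1) (b$3) (b$4) (c$1) (c$3) (c$4),
        det3 (a$1) (a$2) (a$4) (b$1) (b$2) (b$4) (c$1) (c$2) (c$4),
      - det3 (a$1) (a$2) (a$3) (b$1) (b$2) (b$3) (c$1) (c$2) (c$3)]"

definition lin_indep3 :: "'a::real_vector \<Rightarrow> 'a \<Rightarrow> 'a \<Rightarrow> bool" where
  "lin_indep3 a b c \<longleftrightarrow>
     (\<forall>\<alpha> \<beta> \<gamma>. \<alpha> *\<^sub>R a + \<beta> *\<^sub>R b + \<gamma> *\<^sub>R c = 0 \<longrightarrow> \<alpha> = 0 \<and> \<beta> = 0 \<and> \<gamma> = 0)"

definition parallel :: "'a::real_vector \<Rightarrow> 'a \<Rightarrow> bool" where
  "parallel a b \<longleftrightarrow> (\<exists>c. a = c *\<^sub>R b) \<or> (\<exists>c. b = c *\<^sub>R a)"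

definition regular_at ::
  "(real \<Rightarrow> real \<Rightarrow> real \<Rightarrow> real^4) \<Rightarrow> real set \<Rightarrow> real set \<Rightarrow> real set \<Rightarrow> real \<Rightarrow> real \<Rightarrow> real \<Rightarrow> bool" where
  "regular_at P I J K s t q \<longleftrightarrow> lin_indep3 (pd_s P I s t q) (pd_t P J s t q) (pd_q P K s t q)"

definition surf_normal ::
  "(real \<Rightarrow> real \<Rightarrow> real \<Rightarrow> real^4) \<Rightarrow> real set \<Rightarrow> real set \<Rightarrow> real set \<Rightarrow> real \<Rightarrow> real \<Rightarrow> real \<Rightarrow> real^4" where
  "surf_normal P I J K s t q = cross4 (pd_s P I s t q) (pd_t P J s t q) (pd_q P K s t q)"

definition isoparametric ::
  "(real \<Rightarrow> real^4) \<Rightarrow> (real \<Rightarrow> real \<Rightarrow> real \<Rightarrow> real^4) \<Rightarrow> real set \<Rightarrow> real \<Rightarrow> real \<Rightarrow> bool" where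
  "isoparametric r P I t0 q0 \<longleftrightarrow> (\<forall>s\<in>I. P s t0 q0 = r s)"

text \<open>r (with principal normal N) is an isogeodesic of P at (t0,q0): isoparametric,
  P regular along r, and N parallel to the normal of P along r (geodesic).\<close>

definition isogeodesic ::
  "(real \<Rightarrow> real^4) \<Rightarrow> (real \<Rightarrow> real^4) \<Rightarrow> (real \<Rightarrow> real \<Rightarrow> real \<Rightarrow> real^4) \<Rightarrow>
   real set \<Rightarrow> real set \<Rightarrow> real set \<Rightarrow> real \<Rightarrow> real \<Rightarrow> bool" where
  "isogeodesic r N P I J K t0 q0 \<longleftrightarrow>
     isoparametric r P I t0 q0 \<and>
     (\<forall>s\<in>I. regular_at P I J K s t0 q0) \<and>
     (\<forall>s\<in>I. parallel (N s) (surf_normal P I J K s t0 q0))"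

end

theory Submission
  imports Defs
begin

text \<open>Along an isoparametric curve \<open>\<partial>\<^sub>sP = T\<close>, while \<open>\<partial>\<^sub>tP\<close> and \<open>\<partial>\<^sub>qP\<close> have frame
  coordinates \<open>(u\<^sub>t, v\<^sub>t, w\<^sub>t, x\<^sub>t)\<close> and \<open>(u\<^sub>q, v\<^sub>q, w\<^sub>q, x\<^sub>q)\<close>. For an orthonormal frame the
  vector product of three frame vectors is \<open>\<plusminus>\<close> the fourth, so by multilinearity the
  normal \<open>T \<otimes> \<partial>\<^sub>tP \<otimes> \<partial>\<^sub>qP\<close> has coordinates \<open>\<plusminus>m\<^sub>w\<^sub>x, \<plusminus>m\<^sub>v\<^sub>x, \<plusminus>m\<^sub>v\<^sub>w\<close> along \<open>N, B\<^sub>1, B\<^sub>2\<close>,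
  where \<open>m\<close> are the 2\<times>2 minors of the \<open>(v,w,x)\<close>-coordinates. Regularity says that some
  minor is nonzero and the geodesic condition that the normal is parallel to \<open>N\<close>, i.e.
  \<open>m\<^sub>v\<^sub>x = m\<^sub>v\<^sub>w = 0\<close>; together they force \<open>m\<^sub>w\<^sub>x \<noteq> 0\<close>. Once \<open>m\<^sub>w\<^sub>x \<noteq> 0\<close>, Cramer's rule turns
  \<open>m\<^sub>v\<^sub>x = m\<^sub>v\<^sub>w = 0\<close> into \<open>v\<^sub>t = v\<^sub>q = 0\<close>.\<close>

lemma vector_4 [simp]:
  "(vector [a, b, c, d] :: ('a::zero)^4) $ 1 = a"
  "(vector [a, b, c, d] :: ('a::zero)^4) $ 2 = b"
  "(vector [a, b, c, d] :: ('a::zero)^4) $ 3 = c"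
  "(vector [a, b, c, d] :: ('a::zero)^4) $ 4 = d"
  unfolding vector_def by simp_all

lemma cross4_expand:
  "cross4 a (p0 *\<^sub>R a + p1 *\<^sub>R e1 + p2 *\<^sub>R e2 + p3 *\<^sub>R e3) (q0 *\<^sub>R a + q1 *\<^sub>R e1 + q2 *\<^sub>R e2 + q3 *\<^sub>R e3)
   = (p1 * q2 - p2 * q1) *\<^sub>R cross4 a e1 e2 + (p1 * q3 - p3 * q1) *\<^sub>R cross4 a e1 e3
     + (p2 * q3 - p3 * q2) *\<^sub>R cross4 a e2 e3"
  unfolding vec_eq_iff forall_4 cross4_def det3_def by (simp add: algebra_simps)

lemma cross4_orthogonal:
  "cross4 a b c \<bullet> a = 0" "cross4 a b c \<bullet> b = 0" "cross4 a b c \<bullet> c = 0"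
  unfolding inner_vec_def sum_4 cross4_def det3_def by (simp_all add: algebra_simps)

lemma inner_cross4_self:
  "cross4 a b c \<bullet> cross4 a b c =
     (a \<bullet> a) * ((b \<bullet> b) * (c \<bullet> c) - (b \<bullet> c) * (b \<bullet> c))
   - (a \<bullet> b) * ((a \<bullet> b) * (c \<bullet> c) - (b \<bullet> c) * (a \<bullet> c))
   + (a \<bullet> c) * ((a \<bullet> b) * (b \<bullet> c) - (b \<bullet> b) * (a \<bullet> c))"
  unfolding inner_vec_def sum_4 cross4_def det3_def by (simp add: algebra_simps power2_eq_square)

definition orthonormal_frame4 :: "real^4 \<Rightarrow> real^4 \<Rightarrow> real^4 \<Rightarrow> real^4 \<Rightarrow> bool" where
  "orthonormal_frame4 a b c d \<longleftrightarrow>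
     a \<bullet> a = 1 \<and> b \<bullet> b = 1 \<and> c \<bullet> c = 1 \<and> d \<bullet> d = 1 \<and>
     a \<bullet> b = 0 \<and> a \<bullet> c = 0 \<and> a \<bullet> d = 0 \<and> b \<bullet> c = 0 \<and> b \<bullet> d = 0 \<and> c \<bullet> d = 0"

lemma orthonormal_frame4_inner:
  assumes "orthonormal_frame4 a b c d"
  shows "a \<bullet> a = 1" "b \<bullet> b = 1" "c \<bullet> c = 1" "d \<bullet> d = 1"
    "a \<bullet> b = 0" "a \<bullet> c = 0" "a \<bullet> d = 0" "b \<bullet> c = 0" "b \<bullet> d = 0" "c \<bullet> d = 0"
    "b \<bullet> a = 0" "c \<bullet> a = 0" "d \<bullet> a = 0" "c \<bullet> b = 0" "d \<bullet> b = 0" "d \<bullet> c = 0"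
  using assms unfolding orthonormal_frame4_def by (simp_all add: inner_commute)

lemma orthonormal_frame4_permute:
  "orthonormal_frame4 a b c d \<Longrightarrow> orthonormal_frame4 a b d c"
  "orthonormal_frame4 a b c d \<Longrightarrow> orthonormal_frame4 a c d b"
  unfolding orthonormal_frame4_def by (auto simp: inner_commute)

lemma orthonormal_frame4_spans:
  assumes "orthonormal_frame4 a b c d"
  shows "span {a, b, c, d} = UNIV"
proof -
  have "a \<noteq> b" "a \<noteq> c" "a \<noteq> d" "b \<noteq> c" "b \<noteq> d" "c \<noteq> d"
    using assms unfolding orthonormal_frame4_def by auto
  then have card: "card {a, b, c, d} = 4" by simp
  have "pairwise orthogonal {a, b, c, d}"
    using assms unfolding orthonormal_frame4_def pairwise_def orthogonal_def
    by (auto simp: inner_commute)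
  moreover have "0 \<notin> {a, b, c, d}"
    using assms unfolding orthonormal_frame4_def by auto
  ultimately have "independent {a, b, c, d}"
    by (rule pairwise_orthogonal_independent)
  then have "UNIV \<subseteq> span {a, b, c, d}"
    by (rule card_ge_dim_independent[OF subset_UNIV]) (simp add: card)
  then show ?thesis by auto
qed

lemma orthonormal_frame4_orthogonal_eq_0:
  assumes "orthonormal_frame4 a b c d"
    and "z \<bullet> a = 0" "z \<bullet> b = 0" "z \<bullet> c = 0" "z \<bullet> d = 0"
  shows "z = 0"
proof -
  have "orthogonal z z"
    by (rule orthogonal_to_span[where S = "{a, b, c, d}"])
       (use assms orthonormal_frame4_spans in \<open>auto simp: orthogonal_def\<close>)
  then show ?thesis by (simp add: orthogonal_def)
qed

lemma orthonormal_frame4_combination_eq_0: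
  assumes "orthonormal_frame4 a b c d"
  shows "\<alpha> *\<^sub>R a + \<beta> *\<^sub>R b + \<gamma> *\<^sub>R c + \<delta> *\<^sub>R d = 0 \<longleftrightarrow> \<alpha> = 0 \<and> \<beta> = 0 \<and> \<gamma> = 0 \<and> \<delta> = 0"
proof
  assume "\<alpha> *\<^sub>R a + \<beta> *\<^sub>R b + \<gamma> *\<^sub>R c + \<delta> *\<^sub>R d = 0"
  then have "(\<alpha> *\<^sub>R a + \<beta> *\<^sub>R b + \<gamma> *\<^sub>R c + \<delta> *\<^sub>R d) \<bullet> e = 0" for e
    by simp
  from this[of a] this[of b] this[of c] this[of d]
  show "\<alpha> = 0 \<and> \<beta> = 0 \<and> \<gamma> = 0 \<and> \<delta> = 0"
    using orthonormal_frame4_inner[OF assms] by (simp add: inner_add_left)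
qed simp

lemma cross4_orthonormal_frame:
  assumes "orthonormal_frame4 a b c d"
  obtains \<sigma> where "\<sigma> \<noteq> 0" "cross4 a b c = \<sigma> *\<^sub>R d"
proof -
  note frame = orthonormal_frame4_inner[OF assms]
  define \<sigma> where "\<sigma> = cross4 a b c \<bullet> d"
  have "cross4 a b c - \<sigma> *\<^sub>R d = 0"
    by (rule orthonormal_frame4_orthogonal_eq_0[OF assms])
       (simp_all add: \<sigma>_def inner_diff_left cross4_orthogonal frame)
  then have eq: "cross4 a b c = \<sigma> *\<^sub>R d" by simp
  have "\<sigma> * \<sigma> = cross4 a b c \<bullet> cross4 a b c"
    unfolding eq by (simp add: frame)
  also have "\<dots> = 1"
    by (simp add: inner_cross4_self frame)
  finally have "\<sigma> \<noteq> 0" by auto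
  with eq that show ?thesis by blast
qed

lemma pair_independent_iff_minor_nonzero:
  fixes a2 a3 a4 b2 b3 b4 :: real
  shows "(\<forall>\<beta> \<gamma>. \<beta> * a2 + \<gamma> * b2 = 0 \<and> \<beta> * a3 + \<gamma> * b3 = 0 \<and> \<beta> * a4 + \<gamma> * b4 = 0
            \<longrightarrow> \<beta> = 0 \<and> \<gamma> = 0)
     \<longleftrightarrow> a2 * b3 - a3 * b2 \<noteq> 0 \<or> a2 * b4 - a4 * b2 \<noteq> 0 \<or> a3 * b4 - a4 * b3 \<noteq> 0"
    (is "?indep \<longleftrightarrow> ?minor")
proof
  assume ?indep
  show ?minor
  proof (rule ccontr)
    assume "\<not> ?minor"
    then have m: "a2 * b3 = a3 * b2" "a2 * b4 = a4 * b2" "a3 * b4 = a4 * b3" by auto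
    consider "a2 = 0 \<and> a3 = 0 \<and> a4 = 0" | "a2 \<noteq> 0" | "a3 \<noteq> 0" | "a4 \<noteq> 0" by blast
    then show False
    proof cases
      case 1
      with \<open>?indep\<close>[rule_format, of 1 0] show False by simp
    next
      case 2
      with \<open>?indep\<close>[rule_format, of b2 "- a2"] m show False by (simp add: algebra_simps)
    next
      case 3
      with \<open>?indep\<close>[rule_format, of b3 "- a3"] m show False by (simp add: algebra_simps)
    next
      case 4
      with \<open>?indep\<close>[rule_format, of b4 "- a4"] m show False by (simp add: algebra_simps)
    qed
  qed
next
  assume ?minor
  show ?indep
  proof (intro allI impI)
    fix \<beta> \<gamma> :: real
    assume e: "\<beta> * a2 + \<gamma> * b2 = 0 \<and> \<beta> * a3 + \<gamma> * b3 = 0 \<and> \<beta> * a4 + \<gamma> * b4 = 0"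
    have cramer: "\<beta> * (ai * bj - aj * bi) = 0 \<and> \<gamma> * (ai * bj - aj * bi) = 0"
      if "\<beta> * ai + \<gamma> * bi = 0" "\<beta> * aj + \<gamma> * bj = 0" for ai aj bi bj
    proof -
      have "\<beta> * (ai * bj - aj * bi) = (\<beta> * ai + \<gamma> * bi) * bj - (\<beta> * aj + \<gamma> * bj) * bi"
        and "\<gamma> * (ai * bj - aj * bi) = (\<beta> * aj + \<gamma> * bj) * ai - (\<beta> * ai + \<gamma> * bi) * aj"
        by (simp_all add: algebra_simps)
      with that show ?thesis by simp
    qed
    from \<open>?minor\<close> cramer[of a2 b2 a3 b3] cramer[of a2 b2 a4 b4] cramer[of a3 b3 a4 b4] e
    show "\<beta> = 0 \<and> \<gamma> = 0" by auto
  qed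
qed

lemma lin_indep3_frame_iff:
  assumes frame: "orthonormal_frame4 T N B1 B2"
    and Pt: "Pt = a1 *\<^sub>R T + a2 *\<^sub>R N + a3 *\<^sub>R B1 + a4 *\<^sub>R B2"
    and Pq: "Pq = b1 *\<^sub>R T + b2 *\<^sub>R N + b3 *\<^sub>R B1 + b4 *\<^sub>R B2"
  shows "lin_indep3 T Pt Pq \<longleftrightarrow>
      (\<forall>\<beta> \<gamma>. \<beta> * a2 + \<gamma> * b2 = 0 \<and> \<beta> * a3 + \<gamma> * b3 = 0 \<and> \<beta> * a4 + \<gamma> * b4 = 0
            \<longrightarrow> \<beta> = 0 \<and> \<gamma> = 0)"
proof -
  have "\<alpha> *\<^sub>R T + \<beta> *\<^sub>R Pt + \<gamma> *\<^sub>R Pq =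
      (\<alpha> + \<beta> * a1 + \<gamma> * b1) *\<^sub>R T + (\<beta> * a2 + \<gamma> * b2) *\<^sub>R N
      + (\<beta> * a3 + \<gamma> * b3) *\<^sub>R B1 + (\<beta> * a4 + \<gamma> * b4) *\<^sub>R B2" for \<alpha> \<beta> \<gamma>
    unfolding Pt Pq by (simp add: algebra_simps)
  then have combination_eq_0: "\<alpha> *\<^sub>R T + \<beta> *\<^sub>R Pt + \<gamma> *\<^sub>R Pq = 0 \<longleftrightarrow>
      \<alpha> + \<beta> * a1 + \<gamma> * b1 = 0 \<and>
      \<beta> * a2 + \<gamma> * b2 = 0 \<and> \<beta> * a3 + \<gamma> * b3 = 0 \<and> \<beta> * a4 + \<gamma> * b4 = 0" for \<alpha> \<beta> \<gamma>
    by (simp add: orthonormal_frame4_combination_eq_0[OF frame])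
  show ?thesis
    unfolding lin_indep3_def combination_eq_0
  proof (intro iffI allI impI)
    fix \<beta> \<gamma>
    assume "\<forall>\<alpha> \<beta> \<gamma>. \<alpha> + \<beta> * a1 + \<gamma> * b1 = 0 \<and>
        \<beta> * a2 + \<gamma> * b2 = 0 \<and> \<beta> * a3 + \<gamma> * b3 = 0 \<and> \<beta> * a4 + \<gamma> * b4 = 0
        \<longrightarrow> \<alpha> = 0 \<and> \<beta> = 0 \<and> \<gamma> = 0"
      and "\<beta> * a2 + \<gamma> * b2 = 0 \<and> \<beta> * a3 + \<gamma> * b3 = 0 \<and> \<beta> * a4 + \<gamma> * b4 = 0"
    from this(1)[rule_format, of "- (\<beta> * a1 + \<gamma> * b1)" \<beta> \<gamma>] this(2)
    show "\<beta> = 0 \<and> \<gamma> = 0" by simp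
  next
    fix \<alpha> \<beta> \<gamma>
    assume "\<forall>\<beta> \<gamma>. \<beta> * a2 + \<gamma> * b2 = 0 \<and> \<beta> * a3 + \<gamma> * b3 = 0 \<and> \<beta> * a4 + \<gamma> * b4 = 0
        \<longrightarrow> \<beta> = 0 \<and> \<gamma> = 0"
      and "\<alpha> + \<beta> * a1 + \<gamma> * b1 = 0 \<and>
        \<beta> * a2 + \<gamma> * b2 = 0 \<and> \<beta> * a3 + \<gamma> * b3 = 0 \<and> \<beta> * a4 + \<gamma> * b4 = 0"
    from this(1)[rule_format, of \<beta> \<gamma>] this(2) show "\<alpha> = 0 \<and> \<beta> = 0 \<and> \<gamma> = 0" by simp
  qed
qed

lemma minors_vanish_iff_column_zero:
  fixes a2 a3 a4 b2 b3 b4 :: real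
  assumes "a3 * b4 - b3 * a4 \<noteq> 0"
  shows "(a2 * b4 - b2 * a4 = 0 \<and> a2 * b3 - b2 * a3 = 0) \<longleftrightarrow> a2 = 0 \<and> b2 = 0"
proof
  assume h: "a2 * b4 - b2 * a4 = 0 \<and> a2 * b3 - b2 * a3 = 0"
  have "a2 * (a3 * b4 - b3 * a4) = a3 * (a2 * b4 - b2 * a4) - a4 * (a2 * b3 - b2 * a3)"
    and "b2 * (a3 * b4 - b3 * a4) = b3 * (a2 * b4 - b2 * a4) - b4 * (a2 * b3 - b2 * a3)"
    by (simp_all add: algebra_simps)
  with h have "a2 * (a3 * b4 - b3 * a4) = 0" "b2 * (a3 * b4 - b3 * a4) = 0"
    by (simp_all only: diff_self mult_zero_right)
  with assms show "a2 = 0 \<and> b2 = 0" by simp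
qed simp

lemma regular_geodesic_frame_iff:
  assumes frame: "orthonormal_frame4 T N B1 B2"
    and Pt: "Pt = a1 *\<^sub>R T + a2 *\<^sub>R N + a3 *\<^sub>R B1 + a4 *\<^sub>R B2"
    and Pq: "Pq = b1 *\<^sub>R T + b2 *\<^sub>R N + b3 *\<^sub>R B1 + b4 *\<^sub>R B2"
  shows "lin_indep3 T Pt Pq \<and> parallel N (cross4 T Pt Pq) \<longleftrightarrow>
         a2 * b4 - b2 * a4 = 0 \<and> a2 * b3 - b2 * a3 = 0 \<and> a3 * b4 - b3 * a4 \<noteq> 0"
proof -
  note inner_frame = orthonormal_frame4_inner[OF frame]
  define m23 m24 m34 where
    "m23 = a2 * b3 - a3 * b2" and "m24 = a2 * b4 - a4 * b2" and "m34 = a3 * b4 - a4 * b3"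
  obtain \<sigma>\<^sub>2 \<sigma>\<^sub>3 \<sigma>\<^sub>4 where \<sigma>: "\<sigma>\<^sub>2 \<noteq> 0" "\<sigma>\<^sub>3 \<noteq> 0" "\<sigma>\<^sub>4 \<noteq> 0"
    "cross4 T B1 B2 = \<sigma>\<^sub>2 *\<^sub>R N" "cross4 T N B2 = \<sigma>\<^sub>3 *\<^sub>R B1" "cross4 T N B1 = \<sigma>\<^sub>4 *\<^sub>R B2"
    using cross4_orthonormal_frame[OF frame]
      cross4_orthonormal_frame[OF orthonormal_frame4_permute(1)[OF frame]]
      cross4_orthonormal_frame[OF orthonormal_frame4_permute(2)[OF frame]]
    by metis
  have normal: "cross4 T Pt Pq = (m34 * \<sigma>\<^sub>2) *\<^sub>R N + (m24 * \<sigma>\<^sub>3) *\<^sub>R B1 + (m23 * \<sigma>\<^sub>4) *\<^sub>R B2"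
    unfolding Pt Pq cross4_expand \<sigma> m23_def m24_def m34_def by (simp add: algebra_simps)
  have "lin_indep3 T Pt Pq \<longleftrightarrow>
      (\<forall>\<beta> \<gamma>. \<beta> * a2 + \<gamma> * b2 = 0 \<and> \<beta> * a3 + \<gamma> * b3 = 0 \<and> \<beta> * a4 + \<gamma> * b4 = 0
            \<longrightarrow> \<beta> = 0 \<and> \<gamma> = 0)"
    by (rule lin_indep3_frame_iff[OF frame Pt Pq])
  then have indep: "lin_indep3 T Pt Pq \<longleftrightarrow> m23 \<noteq> 0 \<or> m24 \<noteq> 0 \<or> m34 \<noteq> 0"
    unfolding pair_independent_iff_minor_nonzero m23_def m24_def m34_def .
  have parallel: "parallel N (cross4 T Pt Pq) \<longleftrightarrow> m23 = 0 \<and> m24 = 0"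
  proof
    assume "parallel N (cross4 T Pt Pq)"
    have "cross4 T Pt Pq \<bullet> B1 = 0 \<and> cross4 T Pt Pq \<bullet> B2 = 0"
    proof (cases "\<exists>c. N = c *\<^sub>R cross4 T Pt Pq")
      case True
      then obtain c where N: "N = c *\<^sub>R cross4 T Pt Pq" by blast
      have "c * (cross4 T Pt Pq \<bullet> e) = N \<bullet> e" for e
        unfolding N by simp
      from this[of N] this[of B1] this[of B2]
      have "c * (cross4 T Pt Pq \<bullet> N) = 1" "c * (cross4 T Pt Pq \<bullet> B1) = 0"
        "c * (cross4 T Pt Pq \<bullet> B2) = 0"
        by (simp_all add: inner_frame)
      then show ?thesis by (metis mult_eq_0_iff mult_zero_left zero_neq_one)
    next
      case False
      with \<open>parallel N (cross4 T Pt Pq)\<close> obtain c where "cross4 T Pt Pq = c *\<^sub>R N"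
        unfolding parallel_def by blast
      then show ?thesis by (simp add: inner_frame)
    qed
    then show "m23 = 0 \<and> m24 = 0"
      unfolding normal using \<sigma> by (simp add: inner_add_left inner_frame)
  next
    assume "m23 = 0 \<and> m24 = 0"
    then have "cross4 T Pt Pq = (m34 * \<sigma>\<^sub>2) *\<^sub>R N"
      unfolding normal by simp
    then show "parallel N (cross4 T Pt Pq)"
      unfolding parallel_def by blast
  qed
  show ?thesis
    unfolding indep parallel m23_def m24_def m34_def by (auto simp: mult.commute)
qed

lemma vector_derivative_frame_combination:
  fixes f1 f2 f3 f4 :: "real \<Rightarrow> real" and c e1 e2 e3 e4 :: "'a::euclidean_space"
  assumes "a < b" "t \<in> {a..b}"
    and "f1 differentiable (at t within {a..b})" "f2 differentiable (at t within {a..b})"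
        "f3 differentiable (at t within {a..b})" "f4 differentiable (at t within {a..b})"
  shows "vector_derivative (\<lambda>t. c + f1 t *\<^sub>R e1 + f2 t *\<^sub>R e2 + f3 t *\<^sub>R e3 + f4 t *\<^sub>R e4)
           (at t within {a..b})
       = vector_derivative f1 (at t within {a..b}) *\<^sub>R e1 + vector_derivative f2 (at t within {a..b}) *\<^sub>R e2
       + vector_derivative f3 (at t within {a..b}) *\<^sub>R e3 + vector_derivative f4 (at t within {a..b}) *\<^sub>R e4"
proof -
  let ?F = "at t within {a..b}"
  have scaled: "((\<lambda>t. f t *\<^sub>R e) has_vector_derivative vector_derivative f ?F *\<^sub>R e) ?F"
    if "f differentiable ?F" for f :: "real \<Rightarrow> real" and e :: 'a
    using has_vector_derivative_scaleR[OF _ has_vector_derivative_const[of e]] that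
    by (simp add: vector_derivative_works has_real_derivative_iff_has_vector_derivative)
  have "((\<lambda>t. c + f1 t *\<^sub>R e1 + f2 t *\<^sub>R e2 + f3 t *\<^sub>R e3 + f4 t *\<^sub>R e4) has_vector_derivative
      0 + vector_derivative f1 ?F *\<^sub>R e1 + vector_derivative f2 ?F *\<^sub>R e2
        + vector_derivative f3 ?F *\<^sub>R e3 + vector_derivative f4 ?F *\<^sub>R e4) ?F"
    by (intro has_vector_derivative_add has_vector_derivative_const scaled assms)
  then show ?thesis
    by (simp add: vector_derivative_within_closed_interval[OF assms(1,2)])
qed

lemma pd_t_frame_combination:
  fixes P :: "real \<Rightarrow> real \<Rightarrow> real \<Rightarrow> 'a::euclidean_space"
  assumes "\<And>s t q. P s t q = r s + u s t q *\<^sub>R E1 s + v s t q *\<^sub>R E2 s + w s t q *\<^sub>R E3 s + x s t q *\<^sub>R E4 s"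
    and "a < b" "t \<in> {a..b}"
    and "\<And>f. f \<in> {u, v, w, x} \<Longrightarrow> (\<lambda>t'. f s t' q) differentiable (at t within {a..b})"
  shows "pd_t P {a..b} s t q = pd_t u {a..b} s t q *\<^sub>R E1 s + pd_t v {a..b} s t q *\<^sub>R E2 s
                             + pd_t w {a..b} s t q *\<^sub>R E3 s + pd_t x {a..b} s t q *\<^sub>R E4 s"
  unfolding pd_t_def assms(1) by (rule vector_derivative_frame_combination) (use assms in simp_all)

lemma pd_q_frame_combination:
  fixes P :: "real \<Rightarrow> real \<Rightarrow> real \<Rightarrow> 'a::euclidean_space"
  assumes "\<And>s t q. P s t q = r s + u s t q *\<^sub>R E1 s + v s t q *\<^sub>R E2 s + w s t q *\<^sub>R E3 s + x s t q *\<^sub>R E4 s"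
    and "a < b" "q \<in> {a..b}"
    and "\<And>f. f \<in> {u, v, w, x} \<Longrightarrow> (\<lambda>q'. f s t q') differentiable (at q within {a..b})"
  shows "pd_q P {a..b} s t q = pd_q u {a..b} s t q *\<^sub>R E1 s + pd_q v {a..b} s t q *\<^sub>R E2 s
                             + pd_q w {a..b} s t q *\<^sub>R E3 s + pd_q x {a..b} s t q *\<^sub>R E4 s"
  unfolding pd_q_def assms(1) by (rule vector_derivative_frame_combination) (use assms in simp_all)

lemma pd_s_isoparametric:
  assumes "isoparametric r P {a..b} t q" "a < b" "s \<in> {a..b}"
    and "(r has_vector_derivative r') (at s within {a..b})"
  shows "pd_s P {a..b} s t q = r'"
  unfolding pd_s_def
proof (rule vector_derivative_within_closed_interval[OF assms(2,3)])
  show "((\<lambda>s'. P s' t q) has_vector_derivative r') (at s within {a..b})"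
    by (rule has_vector_derivative_transform[OF assms(3) _ assms(4)])
       (use assms(1) in \<open>simp add: isoparametric_def\<close>)
qed

theorem mainTheorem1:
  fixes r T N B1 B2 :: "real \<Rightarrow> real^4"
    and k1 k2 k3 :: "real \<Rightarrow> real"
    and u v w x :: "real \<Rightarrow> real \<Rightarrow> real \<Rightarrow> real"
    and P :: "real \<Rightarrow> real \<Rightarrow> real \<Rightarrow> real^4"
    and L1 L2 T1 T2 Q1 Q2 t0 q0 :: real
  assumes intervals: "L1 < L2" "T1 < T2" "Q1 < Q2"
    and frenet_T: "\<forall>s\<in>{L1..L2}. (r has_vector_derivative T s) (at s within {L1..L2})"
    and frenet_N: "\<forall>s\<in>{L1..L2}. (T has_vector_derivative (k1 s *\<^sub>R N s)) (at s within {L1..L2})"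
    and frenet_B1: "\<forall>s\<in>{L1..L2}. (N has_vector_derivative (- k1 s *\<^sub>R T s + k2 s *\<^sub>R B1 s)) (at s within {L1..L2})"
    and frenet_B2: "\<forall>s\<in>{L1..L2}. (B1 has_vector_derivative (- k2 s *\<^sub>R N s + k3 s *\<^sub>R B2 s)) (at s within {L1..L2})"
    and frenet_end: "\<forall>s\<in>{L1..L2}. (B2 has_vector_derivative (- k3 s *\<^sub>R B1 s)) (at s within {L1..L2})"
    and orthonormal: "\<forall>s\<in>{L1..L2}.
         T s \<bullet> T s = 1 \<and> N s \<bullet> N s = 1 \<and> B1 s \<bullet> B1 s = 1 \<and> B2 s \<bullet> B2 s = 1 \<and>
         T s \<bullet> N s = 0 \<and> T s \<bullet> B1 s = 0 \<and> T s \<bullet> B2 s = 0 \<and>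
         N s \<bullet> B1 s = 0 \<and> N s \<bullet> B2 s = 0 \<and> B1 s \<bullet> B2 s = 0"
    and k1_pos: "\<forall>s\<in>{L1..L2}. k1 s > 0"
    and k2_nz: "\<forall>s\<in>{L1..L2}. k2 s \<noteq> 0"
    and C1: "C1_box u {L1..L2} {T1..T2} {Q1..Q2}" "C1_box v {L1..L2} {T1..T2} {Q1..Q2}"
            "C1_box w {L1..L2} {T1..T2} {Q1..Q2}" "C1_box x {L1..L2} {T1..T2} {Q1..Q2}"
    and P_def: "\<And>s t q. P s t q = r s + u s t q *\<^sub>R T s + v s t q *\<^sub>R N s + w s t q *\<^sub>R B1 s + x s t q *\<^sub>R B2 s"
    and t0: "t0 \<in> {T1..T2}" and q0: "q0 \<in> {Q1..Q2}"
  shows "(isogeodesic r N P {L1..L2} {T1..T2} {Q1..Q2} t0 q0 \<longleftrightarrow>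
      (\<forall>s\<in>{L1..L2}.
         (u s t0 q0 = 0 \<and> v s t0 q0 = 0 \<and> w s t0 q0 = 0 \<and> x s t0 q0 = 0) \<and>
         (pd_t v {T1..T2} s t0 q0 * pd_q x {Q1..Q2} s t0 q0 - pd_q v {Q1..Q2} s t0 q0 * pd_t x {T1..T2} s t0 q0 = 0 \<and>
          pd_t v {T1..T2} s t0 q0 * pd_q w {Q1..Q2} s t0 q0 - pd_q v {Q1..Q2} s t0 q0 * pd_t w {T1..T2} s t0 q0 = 0) \<and>
         pd_t w {T1..T2} s t0 q0 * pd_q x {Q1..Q2} s t0 q0 - pd_q w {Q1..Q2} s t0 q0 * pd_t x {T1..T2} s t0 q0 \<noteq> 0)) \<and>
    (\<forall>s\<in>{L1..L2}.
         (u s t0 q0 = 0 \<and> v s t0 q0 = 0 \<and> w s t0 q0 = 0 \<and> x s t0 q0 = 0) \<and>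
         pd_t w {T1..T2} s t0 q0 * pd_q x {Q1..Q2} s t0 q0 - pd_q w {Q1..Q2} s t0 q0 * pd_t x {T1..T2} s t0 q0 \<noteq> 0
         \<longrightarrow>
         ((pd_t v {T1..T2} s t0 q0 * pd_q x {Q1..Q2} s t0 q0 - pd_q v {Q1..Q2} s t0 q0 * pd_t x {T1..T2} s t0 q0 = 0 \<and>
           pd_t v {T1..T2} s t0 q0 * pd_q w {Q1..Q2} s t0 q0 - pd_q v {Q1..Q2} s t0 q0 * pd_t w {T1..T2} s t0 q0 = 0)
          \<longleftrightarrow> (pd_t v {T1..T2} s t0 q0 = 0 \<and> pd_q v {Q1..Q2} s t0 q0 = 0)))"
proof -
  let ?I = "{L1..L2}" and ?J = "{T1..T2}" and ?K = "{Q1..Q2}"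
  have frame: "orthonormal_frame4 (T s) (N s) (B1 s) (B2 s)" if "s \<in> ?I" for s
    using orthonormal that unfolding orthonormal_frame4_def by blast
  have iso: "isoparametric r P ?I t0 q0 \<longleftrightarrow>
      (\<forall>s\<in>?I. u s t0 q0 = 0 \<and> v s t0 q0 = 0 \<and> w s t0 q0 = 0 \<and> x s t0 q0 = 0)"
    unfolding isoparametric_def P_def using orthonormal_frame4_combination_eq_0[OF frame]
    by (simp add: add.assoc)
  have diff_t: "(\<lambda>t'. f s t' q0) differentiable (at t0 within ?J)"
    and diff_q: "(\<lambda>q'. f s t0 q') differentiable (at q0 within ?K)"
    if "s \<in> ?I" "f \<in> {u, v, w, x}" for f s
    using C1 that t0 q0 unfolding C1_box_def by auto
  have pointwise: "regular_at P ?I ?J ?K s t0 q0 \<and> parallel (N s) (surf_normal P ?I ?J ?K s t0 q0)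
      \<longleftrightarrow> pd_t v ?J s t0 q0 * pd_q x ?K s t0 q0 - pd_q v ?K s t0 q0 * pd_t x ?J s t0 q0 = 0 \<and>
          pd_t v ?J s t0 q0 * pd_q w ?K s t0 q0 - pd_q v ?K s t0 q0 * pd_t w ?J s t0 q0 = 0 \<and>
          pd_t w ?J s t0 q0 * pd_q x ?K s t0 q0 - pd_q w ?K s t0 q0 * pd_t x ?J s t0 q0 \<noteq> 0"
    if "isoparametric r P ?I t0 q0" "s \<in> ?I" for s
    unfolding regular_at_def surf_normal_def
      pd_s_isoparametric[OF that(1) intervals(1) that(2) frenet_T[rule_format, OF that(2)]]
  proof (rule regular_geodesic_frame_iff[OF frame[OF that(2)]])
    show "pd_t P ?J s t0 q0 = pd_t u ?J s t0 q0 *\<^sub>R T s + pd_t v ?J s t0 q0 *\<^sub>R N s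
        + pd_t w ?J s t0 q0 *\<^sub>R B1 s + pd_t x ?J s t0 q0 *\<^sub>R B2 s"
      by (rule pd_t_frame_combination[OF P_def intervals(2) t0]) (rule diff_t[OF that(2)])
    show "pd_q P ?K s t0 q0 = pd_q u ?K s t0 q0 *\<^sub>R T s + pd_q v ?K s t0 q0 *\<^sub>R N s
        + pd_q w ?K s t0 q0 *\<^sub>R B1 s + pd_q x ?K s t0 q0 *\<^sub>R B2 s"
      by (rule pd_q_frame_combination[OF P_def intervals(3) q0]) (rule diff_q[OF that(2)])
  qed
  have "isogeodesic r N P ?I ?J ?K t0 q0 \<longleftrightarrow> isoparametric r P ?I t0 q0 \<and>
      (\<forall>s\<in>?I. pd_t v ?J s t0 q0 * pd_q x ?K s t0 q0 - pd_q v ?K s t0 q0 * pd_t x ?J s t0 q0 = 0 \<and>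
          pd_t v ?J s t0 q0 * pd_q w ?K s t0 q0 - pd_q v ?K s t0 q0 * pd_t w ?J s t0 q0 = 0 \<and>
          pd_t w ?J s t0 q0 * pd_q x ?K s t0 q0 - pd_q w ?K s t0 q0 * pd_t x ?J s t0 q0 \<noteq> 0)"
    unfolding isogeodesic_def using pointwise by auto
  then show ?thesis
    unfolding iso
    by (intro conjI ballI impI)
       (simp add: ball_conj_distrib, rule minors_vanish_iff_column_zero, blast)
qed

end
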